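(* Let $(X,\le)$ be a non-empty well-ordered set with least element $x_0$, let $G$ be the free nilpotent group of class two on $X$, and take $A=G$, $K=[G,G]=Z(G)$. For each $y\in X$ let $\psi_y$ be the endomorphism of the abelian group $G/K$ with $\psi_y(x_0K)=yK$ and $\psi_y(xK)=K$ for $x\in X\setminus\{x_0\}$, and let $g\circ_{y}h=g\cdot\psi_y^\uparrow(g)\cdot h\cdot\psi_y^\uparrow(g)^{-1}$ for a lifting $\psi_y^\uparrow:G\to G$ of $\psi_y$ (i.e. $\psi_y^\uparrow(g)K=\psi_y(gK)$). Then $(\circ_y:y\in X)$ is a brace block on $G$, $x_0\circ_y x_0=x_0\cdot y\cdot x_0\cdot y^{-1}$, and the operations $\circ_y$, $y\in X$, are pairwise distinct; hence the brace block consists of $|X|$ distinct operations.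
   Context: A skew brace is a triple $(G,\cdot,\circ)$ where $(G,\cdot)$ and $(G,\circ)$ are groups and $g\circ(h\cdot k)=(g\circ h)\cdot g^{-1}\cdot(g\circ k)$ for all $g,h,k$. A bi-skew brace is a triple $(G,\cdot,\circ)$ such that both $(G,\cdot,\circ)$ and $(G,\circ,\cdot)$ are skew braces. A brace block on a set $G$ is a family of group operations on $G$ any two of which form a bi-skew brace. The operation $\circ_y$ does not depend on the choice of lifting since $K$ is central. *)

theory Defs
  imports "HOL-Algebra.Solvable_Groups"
begin

text \<open>Standard concrete model of the free nilpotent group of class two on a
 (well-)ordered set X: elements are pairs (a,c) where a is a finitely supported
 function X -> Z (the image in G/[G,G], free abelian on X) and c is a finitely
 supported function on pairs x < y (coordinates with respect to the basis of
 basic commutators of [G,G], free abelian on pairs x<y).\<close>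

definition fn2_carrier :: "(('x::linorder \<Rightarrow> int) \<times> ('x \<Rightarrow> 'x \<Rightarrow> int)) set" where
  "fn2_carrier = {(a, c). finite {x. a x \<noteq> 0} \<and> finite {(x, y). c x y \<noteq> 0}
                        \<and> (\<forall>x y. c x y \<noteq> 0 \<longrightarrow> x < y)}"

definition fn2_mult ::
  "(('x::linorder \<Rightarrow> int) \<times> ('x \<Rightarrow> 'x \<Rightarrow> int)) \<Rightarrow> (('x \<Rightarrow> int) \<times> ('x \<Rightarrow> 'x \<Rightarrow> int))
     \<Rightarrow> (('x \<Rightarrow> int) \<times> ('x \<Rightarrow> 'x \<Rightarrow> int))" where
  "fn2_mult g h = (\<lambda>x. fst g x + fst h x,
                   \<lambda>x y. snd g x y + snd h x y + (if x < y then fst g y * fst h x else 0))"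

definition free_nil2 :: "(('x::linorder \<Rightarrow> int) \<times> ('x \<Rightarrow> 'x \<Rightarrow> int)) monoid" where
  "free_nil2 = \<lparr>carrier = fn2_carrier, mult = fn2_mult, one = (\<lambda>_. 0, \<lambda>_ _. 0)\<rparr>"

definition fn2_gen :: "'x::linorder \<Rightarrow> (('x \<Rightarrow> int) \<times> ('x \<Rightarrow> 'x \<Rightarrow> int))" where
  "fn2_gen x = (\<lambda>z. if z = x then 1 else 0, \<lambda>_ _. 0)"

definition group_op :: "'g set \<Rightarrow> ('g \<Rightarrow> 'g \<Rightarrow> 'g) \<Rightarrow> bool" where
  "group_op S f \<longleftrightarrow> (\<exists>e. group \<lparr>carrier = S, mult = f, one = e\<rparr>)"

definition skew_brace :: "'g set \<Rightarrow> ('g \<Rightarrow> 'g \<Rightarrow> 'g) \<Rightarrow> ('g \<Rightarrow> 'g \<Rightarrow> 'g) \<Rightarrow> bool" where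
  "skew_brace S dot circ \<longleftrightarrow>
     (\<exists>e e'. group \<lparr>carrier = S, mult = dot, one = e\<rparr> \<and> group \<lparr>carrier = S, mult = circ, one = e'\<rparr> \<and>
        (\<forall>g\<in>S. \<forall>h\<in>S. \<forall>k\<in>S.
           circ g (dot h k) = dot (dot (circ g h) (inv\<^bsub>\<lparr>carrier = S, mult = dot, one = e\<rparr>\<^esub> g)) (circ g k)))"

definition bi_skew_brace :: "'g set \<Rightarrow> ('g \<Rightarrow> 'g \<Rightarrow> 'g) \<Rightarrow> ('g \<Rightarrow> 'g \<Rightarrow> 'g) \<Rightarrow> bool" where
  "bi_skew_brace S dot circ \<longleftrightarrow> skew_brace S dot circ \<and> skew_brace S circ dot"

definition brace_block :: "'g set \<Rightarrow> ('i \<Rightarrow> 'g \<Rightarrow> 'g \<Rightarrow> 'g) \<Rightarrow> bool" where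
  "brace_block S ops \<longleftrightarrow> (\<forall>i. group_op S (ops i)) \<and> (\<forall>i j. bi_skew_brace S (ops i) (ops j))"

end

theory Submission
  imports Defs
begin

text \<open>
  In the model of G as pairs (a, c), the commutator subgroup K is exactly the set of pairs with
  a = 0.  A lift of psi_y is therefore determined modulo K, and its first component is forced
  to be g(x0) times the indicator of y.  As K is central, conjugation only depends on the
  conjugating element modulo K, so the operation o_y becomes
  (a, c) o_y (a', c') = (a + a', c + c' + B_y(a, a'))
  for a biadditive form B_y supported on pairs x < y.  Any two operations of this twisted shape
  form a bi-skew brace, because the brace identity reduces to biadditivity of the forms.
  Finally x0 o_y y and x0 o_z y differ in the commutator coordinate of {y, z}.
\<close>

type_synonym 'x fn2_elem = "('x \<Rightarrow> int) \<times> ('x \<Rightarrow> 'x \<Rightarrow> int)"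

definition fsupp :: "('x \<Rightarrow> int) \<Rightarrow> bool" where
  "fsupp a \<longleftrightarrow> finite {x. a x \<noteq> 0}"

lemma fsupp_add: "fsupp a \<Longrightarrow> fsupp b \<Longrightarrow> fsupp (\<lambda>z. a z + b z)"
  unfolding fsupp_def by (rule finite_subset[of _ "{x. a x \<noteq> 0} \<union> {x. b x \<noteq> 0}"]) auto

lemma fn2_carrier_iff:
  "(a, c) \<in> fn2_carrier \<longleftrightarrow> fsupp a \<and> finite {(x, y). c x y \<noteq> 0} \<and> (\<forall>x y. c x y \<noteq> 0 \<longrightarrow> x < y)"
  by (simp add: fn2_carrier_def fsupp_def)

text \<open>The central extension of the finitely supported functions X \<rightarrow> \<int> by the functions on
  pairs x < y with 2-cocycle B; free_nil2 is the case B = fn2_form.\<close>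

definition twisted_mult ::
  "(('x \<Rightarrow> int) \<Rightarrow> ('x \<Rightarrow> int) \<Rightarrow> 'x \<Rightarrow> 'x \<Rightarrow> int) \<Rightarrow> 'x fn2_elem \<Rightarrow> 'x fn2_elem \<Rightarrow> 'x fn2_elem" where
  "twisted_mult B g h =
     (\<lambda>x. fst g x + fst h x, \<lambda>x y. snd g x y + snd h x y + B (fst g) (fst h) x y)"

definition twisted_inv ::
  "(('x \<Rightarrow> int) \<Rightarrow> ('x \<Rightarrow> int) \<Rightarrow> 'x \<Rightarrow> 'x \<Rightarrow> int) \<Rightarrow> 'x fn2_elem \<Rightarrow> 'x fn2_elem" where
  "twisted_inv B g = (\<lambda>x. - fst g x, \<lambda>x y. - snd g x y + B (fst g) (fst g) x y)"

locale biadditive_form =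
  fixes B :: "('x::linorder \<Rightarrow> int) \<Rightarrow> ('x \<Rightarrow> int) \<Rightarrow> 'x \<Rightarrow> 'x \<Rightarrow> int"
  assumes finite_support: "fsupp a \<Longrightarrow> fsupp a' \<Longrightarrow> finite {(x, y). B a a' x y \<noteq> 0}"
    and support_ordered: "B a a' x y \<noteq> 0 \<Longrightarrow> x < y"
    and add_left: "B (\<lambda>z. a z + a' z) a'' x y = B a a'' x y + B a' a'' x y"
    and add_right: "B a (\<lambda>z. a' z + a'' z) x y = B a a' x y + B a a'' x y"
begin

lemma zero_left [simp]: "B (\<lambda>_. 0) a x y = 0"
  using add_left[of "\<lambda>_. 0" "\<lambda>_. 0" a x y] by simp

lemma zero_right [simp]: "B a (\<lambda>_. 0) x y = 0"
  using add_right[of a "\<lambda>_. 0" "\<lambda>_. 0" x y] by simp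

lemma minus_left: "B (\<lambda>z. - a z) a' x y = - B a a' x y"
  using add_left[of a "\<lambda>z. - a z" a' x y] by simp

lemma minus_right: "B a (\<lambda>z. - a' z) x y = - B a a' x y"
  using add_right[of a a' "\<lambda>z. - a' z" x y] by simp

lemmas form_simps = add_left add_right minus_left minus_right

lemma twisted_mult_closed:
  assumes "g \<in> fn2_carrier" "h \<in> fn2_carrier"
  shows "twisted_mult B g h \<in> fn2_carrier"
proof -
  obtain a c a' c' where g: "g = (a, c)" and h: "h = (a', c')" by force
  have "{(x, y). c x y + c' x y + B a a' x y \<noteq> 0}
          \<subseteq> {(x, y). c x y \<noteq> 0} \<union> {(x, y). c' x y \<noteq> 0} \<union> {(x, y). B a a' x y \<noteq> 0}"
    by auto
  with assms finite_support[of a a'] support_ordered[of a a'] show ?thesis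
    by (auto simp: g h twisted_mult_def fn2_carrier_iff fsupp_add intro: finite_subset)
      (metis add.right_neutral)
qed

lemma twisted_inv_closed:
  assumes "g \<in> fn2_carrier"
  shows "twisted_inv B g \<in> fn2_carrier"
proof -
  obtain a c where g: "g = (a, c)" by force
  have "{(x, y). - c x y + B a a x y \<noteq> 0} \<subseteq> {(x, y). c x y \<noteq> 0} \<union> {(x, y). B a a x y \<noteq> 0}"
    by auto
  with assms finite_support[of a a] support_ordered[of a a] show ?thesis
    by (auto simp: g twisted_inv_def fn2_carrier_iff fsupp_def intro: finite_subset)
      metis
qed

context
  fixes f :: "'x fn2_elem \<Rightarrow> 'x fn2_elem \<Rightarrow> 'x fn2_elem"
  assumes f_eq: "\<And>g h. g \<in> fn2_carrier \<Longrightarrow> h \<in> fn2_carrier \<Longrightarrow> f g h = twisted_mult B g h"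
begin

lemma group_twisted: "group \<lparr>carrier = fn2_carrier, mult = f, one = (\<lambda>_. 0, \<lambda>_ _. 0)\<rparr>"
proof (rule groupI; simp)
  show "(\<lambda>_. 0, \<lambda>_ _. 0) \<in> (fn2_carrier :: 'x fn2_elem set)"
    by (simp add: fn2_carrier_def)
next
  fix g h k :: "'x fn2_elem" assume "g \<in> fn2_carrier" "h \<in> fn2_carrier" "k \<in> fn2_carrier"
  then show "f g h \<in> fn2_carrier" "f (f g h) k = f g (f h k)"
    by (simp_all add: f_eq twisted_mult_closed)
      (simp add: twisted_mult_def fun_eq_iff form_simps algebra_simps)
next
  fix g :: "'x fn2_elem" assume "g \<in> fn2_carrier"
  moreover have "(\<lambda>_. 0, \<lambda>_ _. 0) \<in> (fn2_carrier :: 'x fn2_elem set)"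
    by (simp add: fn2_carrier_def)
  ultimately show "f (\<lambda>_. 0, \<lambda>_ _. 0) g = g"
    by (simp add: f_eq twisted_mult_def)
next
  fix g :: "'x fn2_elem" assume g: "g \<in> fn2_carrier"
  then have "f (twisted_inv B g) g = (\<lambda>_. 0, \<lambda>_ _. 0)"
    by (simp add: f_eq twisted_inv_closed) (simp add: twisted_mult_def twisted_inv_def fun_eq_iff minus_left)
  with g show "\<exists>h\<in>fn2_carrier. f h g = (\<lambda>_. 0, \<lambda>_ _. 0)"
    using twisted_inv_closed by blast
qed

lemma inv_twisted:
  assumes "g \<in> fn2_carrier"
  shows "inv\<^bsub>\<lparr>carrier = fn2_carrier, mult = f, one = (\<lambda>_. 0, \<lambda>_ _. 0)\<rparr>\<^esub> g = twisted_inv B g"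
  using assms
  by (intro group.inv_equality[OF group_twisted])
    (simp_all add: f_eq twisted_inv_closed, simp add: twisted_mult_def twisted_inv_def fun_eq_iff minus_left)

end

end

lemma skew_brace_twisted:
  fixes B C :: "('x::linorder \<Rightarrow> int) \<Rightarrow> ('x \<Rightarrow> int) \<Rightarrow> 'x \<Rightarrow> 'x \<Rightarrow> int"
  assumes B: "biadditive_form B" and C: "biadditive_form C"
    and f: "\<And>g h. g \<in> fn2_carrier \<Longrightarrow> h \<in> fn2_carrier \<Longrightarrow> f g h = twisted_mult B g h"
    and f': "\<And>g h. g \<in> fn2_carrier \<Longrightarrow> h \<in> fn2_carrier \<Longrightarrow> f' g h = twisted_mult C g h"
  shows "skew_brace fn2_carrier f f'"
  unfolding skew_brace_def
proof (intro exI conjI ballI)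
  show "group \<lparr>carrier = fn2_carrier, mult = f, one = (\<lambda>_. 0, \<lambda>_ _. 0)\<rparr>"
    using B f by (rule biadditive_form.group_twisted)
  show "group \<lparr>carrier = fn2_carrier, mult = f', one = (\<lambda>_. 0, \<lambda>_ _. 0)\<rparr>"
    using C f' by (rule biadditive_form.group_twisted)
  fix g h k :: "'x fn2_elem" assume ghk: "g \<in> fn2_carrier" "h \<in> fn2_carrier" "k \<in> fn2_carrier"
  show "f' g (f h k) =
    f (f (f' g h) (inv\<^bsub>\<lparr>carrier = fn2_carrier, mult = f, one = (\<lambda>_. 0, \<lambda>_ _. 0)\<rparr>\<^esub> g)) (f' g k)"
    using ghk
    by (simp add: biadditive_form.inv_twisted[OF B f] f f' biadditive_form.twisted_mult_closed[OF B]
        biadditive_form.twisted_mult_closed[OF C] biadditive_form.twisted_inv_closed[OF B])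
      (simp add: twisted_mult_def twisted_inv_def fun_eq_iff algebra_simps
        biadditive_form.form_simps[OF B] biadditive_form.form_simps[OF C])
qed

lemma brace_block_twisted:
  assumes "\<And>i. biadditive_form (B i)"
    and "\<And>i g h. g \<in> fn2_carrier \<Longrightarrow> h \<in> fn2_carrier \<Longrightarrow> ops i g h = twisted_mult (B i) g h"
  shows "brace_block fn2_carrier ops"
proof -
  have "group_op fn2_carrier (ops i)" for i
    unfolding group_op_def using biadditive_form.group_twisted[OF assms] by blast
  moreover have "skew_brace fn2_carrier (ops i) (ops j)" for i j
    using skew_brace_twisted[OF assms(1) assms(1)] assms(2) by blast
  ultimately show ?thesis
    by (simp add: brace_block_def bi_skew_brace_def)
qed

definition fn2_form :: "('x::linorder \<Rightarrow> int) \<Rightarrow> ('x \<Rightarrow> int) \<Rightarrow> 'x \<Rightarrow> 'x \<Rightarrow> int" where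
  "fn2_form a a' x y = (if x < y then a y * a' x else 0)"

lemma biadditive_fn2_form: "biadditive_form fn2_form"
proof
  fix a a' :: "'x::linorder \<Rightarrow> int" assume "fsupp a" "fsupp a'"
  moreover have "{(x, y). fn2_form a a' x y \<noteq> 0} \<subseteq> {x. a' x \<noteq> 0} \<times> {y. a y \<noteq> 0}"
    by (auto simp: fn2_form_def split: if_splits)
  ultimately show "finite {(x, y). fn2_form a a' x y \<noteq> 0}"
    by (auto simp: fsupp_def intro: finite_subset)
qed (auto simp: fn2_form_def algebra_simps split: if_splits)

lemma carrier_free_nil2: "carrier free_nil2 = fn2_carrier"
  by (simp add: free_nil2_def)

lemma mult_free_nil2: "g \<otimes>\<^bsub>free_nil2\<^esub> h = twisted_mult fn2_form g h"
  by (simp add: free_nil2_def fn2_mult_def twisted_mult_def fn2_form_def)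

lemma group_free_nil2: "group free_nil2"
  unfolding free_nil2_def
  by (rule biadditive_form.group_twisted[OF biadditive_fn2_form])
    (simp add: fn2_mult_def twisted_mult_def fn2_form_def)

lemma inv_free_nil2: "g \<in> carrier free_nil2 \<Longrightarrow> inv\<^bsub>free_nil2\<^esub> g = twisted_inv fn2_form g"
  unfolding free_nil2_def
  by (rule biadditive_form.inv_twisted[OF biadditive_fn2_form])
    (simp_all add: fn2_mult_def twisted_mult_def fn2_form_def)

lemma fn2_gen_closed: "fn2_gen x \<in> carrier free_nil2"
  by (simp add: fn2_gen_def carrier_free_nil2 fn2_carrier_iff fsupp_def)

lemma (in group) rcos_eq_iff_mult_inv_mem:
  assumes "subgroup H G" "x \<in> carrier G" "y \<in> carrier G"
  shows "H #> x = H #> y \<longleftrightarrow> x \<otimes> inv y \<in> H"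
proof -
  have "H #> x = H #> y \<longleftrightarrow> x \<in> H #> y"
    using assms repr_independence repr_independenceD by metis
  also have "\<dots> \<longleftrightarrow> x \<otimes> inv y \<in> H"
    using assms by (intro subgroup.rcos_module is_group)
  finally show ?thesis .
qed

interpretation fn2: group free_nil2
  by (rule group_free_nil2)

lemma fsupp_fst: "g \<in> carrier free_nil2 \<Longrightarrow> fsupp (fst g)"
  by (cases g) (simp add: carrier_free_nil2 fn2_carrier_iff)

lemma fst_mult_free_nil2 [simp]: "fst (g \<otimes>\<^bsub>free_nil2\<^esub> h) = (\<lambda>x. fst g x + fst h x)"
  by (simp add: mult_free_nil2 twisted_mult_def)

lemma fst_inv_free_nil2 [simp]:
  "g \<in> carrier free_nil2 \<Longrightarrow> fst (inv\<^bsub>free_nil2\<^esub> g) = (\<lambda>x. - fst g x)"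
  by (simp add: inv_free_nil2 twisted_inv_def)

lemma subgroup_fst_zero: "subgroup {g \<in> carrier free_nil2. fst g = (\<lambda>_. 0)} free_nil2"
proof (rule fn2.subgroupI)
  show "{g \<in> carrier free_nil2. fst g = (\<lambda>_. 0)} \<noteq> {}"
    using fn2.one_closed by (auto simp: free_nil2_def)
  fix g h :: "'x::linorder fn2_elem" assume "g \<in> {g \<in> carrier free_nil2. fst g = (\<lambda>_. 0)}" "h \<in> {g \<in> carrier free_nil2. fst g = (\<lambda>_. 0)}"
  then show "inv\<^bsub>free_nil2\<^esub> g \<in> {g \<in> carrier free_nil2. fst g = (\<lambda>_. 0)}"
    and "g \<otimes>\<^bsub>free_nil2\<^esub> h \<in> {g \<in> carrier free_nil2. fst g = (\<lambda>_. 0)}"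
    by simp_all
qed auto

lemma subgroup_derived_free_nil2: "subgroup (derived free_nil2 (carrier free_nil2)) free_nil2"
  by (rule fn2.derived_is_subgroup) simp

lemma derived_subset_fst_zero:
  "derived free_nil2 (carrier free_nil2) \<subseteq> {g \<in> carrier free_nil2. fst g = (\<lambda>_. 0)}"
  unfolding derived_def
  by (rule fn2.generate_subgroup_incl[OF _ subgroup_fst_zero]) auto

definition fn2_central :: "'x \<Rightarrow> 'x \<Rightarrow> int \<Rightarrow> 'x fn2_elem" where
  "fn2_central p q m = (\<lambda>_. 0, \<lambda>x y. if x = p \<and> y = q then m else 0)"

lemma fn2_central_closed: "p < q \<Longrightarrow> fn2_central p q m \<in> carrier free_nil2"
  by (auto simp: fn2_central_def carrier_free_nil2 fn2_carrier_iff fsupp_def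
      intro: finite_subset[of _ "{(p, q)}"])

lemma commutator_fn2_gen:
  "p < q \<Longrightarrow> fn2_gen q \<otimes>\<^bsub>free_nil2\<^esub> fn2_gen p \<otimes>\<^bsub>free_nil2\<^esub> inv\<^bsub>free_nil2\<^esub> fn2_gen q
     \<otimes>\<^bsub>free_nil2\<^esub> inv\<^bsub>free_nil2\<^esub> fn2_gen p = fn2_central p q 1"
  by (simp add: fn2_gen_closed inv_free_nil2 mult_free_nil2)
    (auto simp: twisted_mult_def twisted_inv_def fn2_form_def fn2_gen_def fn2_central_def fun_eq_iff)

lemma fn2_central_in_derived:
  assumes pq: "p < q"
  shows "fn2_central p q m \<in> derived free_nil2 (carrier free_nil2)"
proof -
  have one: "fn2_central p q 1 \<in> derived free_nil2 (carrier free_nil2)"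
    unfolding derived_def commutator_fn2_gen[OF pq, symmetric]
    by (blast intro: generate.incl fn2_gen_closed)
  have step: "fn2_central p q (m + 1) = fn2_central p q m \<otimes>\<^bsub>free_nil2\<^esub> fn2_central p q 1"
    and step_inv: "fn2_central p q (m - 1) = fn2_central p q m \<otimes>\<^bsub>free_nil2\<^esub> inv\<^bsub>free_nil2\<^esub> fn2_central p q 1"
    for m
    by (simp_all add: inv_free_nil2 fn2_central_closed[OF pq] mult_free_nil2)
      (auto simp: twisted_mult_def twisted_inv_def fn2_form_def fn2_central_def fun_eq_iff)
  show ?thesis
  proof (induction m rule: int_induct[where k = 0])
    case base
    have "fn2_central p q 0 = \<one>\<^bsub>free_nil2\<^esub>"
      by (simp add: fn2_central_def free_nil2_def fun_eq_iff)
    then show ?case by (simp add: subgroup.one_closed[OF subgroup_derived_free_nil2])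
  qed (simp_all only: step step_inv subgroup.m_closed[OF subgroup_derived_free_nil2]
      subgroup.m_inv_closed[OF subgroup_derived_free_nil2] one)
qed

lemma fst_zero_in_derived:
  assumes "finite F" "(\<lambda>_. 0, c) \<in> fn2_carrier" "{(x, y). c x y \<noteq> 0} \<subseteq> F"
  shows "(\<lambda>_. 0, c) \<in> derived free_nil2 (carrier free_nil2)"
  using assms
proof (induction F arbitrary: c rule: finite_induct)
  case empty
  then have "(\<lambda>_. 0, c) = \<one>\<^bsub>free_nil2\<^esub>"
    by (auto simp: free_nil2_def fun_eq_iff)
  then show ?case by (simp add: subgroup.one_closed[OF subgroup_derived_free_nil2])
next
  case (insert pq F)
  obtain p q where pq: "pq = (p, q)" by force
  define c' where "c' x y = (if x = p \<and> y = q then 0 else c x y)" for x y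
  have "{(x, y). c' x y \<noteq> 0} \<subseteq> {(x, y). c x y \<noteq> 0}"
    by (auto simp: c'_def)
  then have "finite {(x, y). c' x y \<noteq> 0}"
    using insert.prems(1) by (auto simp: fn2_carrier_iff intro: finite_subset)
  with insert.prems(1) have "(\<lambda>_. 0, c') \<in> fn2_carrier"
    by (simp add: fn2_carrier_iff c'_def)
  moreover have "{(x, y). c' x y \<noteq> 0} \<subseteq> F"
    using insert.prems(2) by (auto simp: c'_def pq)
  ultimately have c': "(\<lambda>_. 0, c') \<in> derived free_nil2 (carrier free_nil2)"
    by (rule insert.IH)
  show ?case
  proof (cases "c p q = 0")
    case True
    then have "c' = c" by (auto simp: c'_def fun_eq_iff)
    with c' show ?thesis by simp
  next
    case False
    with insert.prems(1) have "p < q" by (auto simp: fn2_carrier_iff)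
    have "(\<lambda>_. 0, c) = (\<lambda>_. 0, c') \<otimes>\<^bsub>free_nil2\<^esub> fn2_central p q (c p q)"
      by (auto simp: mult_free_nil2 twisted_mult_def fn2_form_def fn2_central_def c'_def fun_eq_iff)
    with c' fn2_central_in_derived[OF \<open>p < q\<close>] show ?thesis
      by (simp add: subgroup.m_closed[OF subgroup_derived_free_nil2])
  qed
qed

lemma derived_free_nil2:
  "derived free_nil2 (carrier free_nil2) = {g \<in> carrier free_nil2. fst g = (\<lambda>_. 0)}"
proof
  show "{g \<in> carrier free_nil2. fst g = (\<lambda>_. 0)} \<subseteq> derived free_nil2 (carrier free_nil2)"
  proof
    fix g assume "g \<in> {g \<in> carrier free_nil2. fst g = (\<lambda>_. 0)}"
    then show "g \<in> derived free_nil2 (carrier free_nil2)"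
      using fst_zero_in_derived[of "{(x, y). snd g x y \<noteq> 0}" "snd g"]
      by (cases g) (simp add: carrier_free_nil2 fn2_carrier_iff)
  qed
qed (rule derived_subset_fst_zero)

lemma rcos_derived_eq_iff:
  assumes "u \<in> carrier free_nil2" "v \<in> carrier free_nil2"
  shows "derived free_nil2 (carrier free_nil2) #>\<^bsub>free_nil2\<^esub> u
      = derived free_nil2 (carrier free_nil2) #>\<^bsub>free_nil2\<^esub> v \<longleftrightarrow> fst u = fst v"
proof -
  have "derived free_nil2 (carrier free_nil2) #>\<^bsub>free_nil2\<^esub> u
      = derived free_nil2 (carrier free_nil2) #>\<^bsub>free_nil2\<^esub> v
    \<longleftrightarrow> u \<otimes>\<^bsub>free_nil2\<^esub> inv\<^bsub>free_nil2\<^esub> v \<in> derived free_nil2 (carrier free_nil2)"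
    by (rule fn2.rcos_eq_iff_mult_inv_mem[OF subgroup_derived_free_nil2 assms])
  also have "\<dots> \<longleftrightarrow> fst (u \<otimes>\<^bsub>free_nil2\<^esub> inv\<^bsub>free_nil2\<^esub> v) = (\<lambda>_. 0)"
    unfolding derived_free_nil2 using assms by blast
  also have "\<dots> \<longleftrightarrow> fst u = fst v"
    using assms by (simp add: fun_eq_iff)
  finally show ?thesis .
qed

lemma fsupp_single: "fsupp (\<lambda>z. if z = x then m else 0)"
  unfolding fsupp_def by (rule finite_subset[of _ "{x}"]) auto

lemma additive_vanishing_on_basis:
  fixes D :: "('x \<Rightarrow> int) \<Rightarrow> 'b::ab_group_add"
  assumes add: "\<And>a b. fsupp a \<Longrightarrow> fsupp b \<Longrightarrow> D (\<lambda>z. a z + b z) = D a + D b"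
    and basis: "\<And>x. D (\<lambda>z. if z = x then 1 else 0) = 0"
    and "fsupp a"
  shows "D a = 0"
proof -
  have single: "D (\<lambda>z. if z = x then m else 0) = 0" for x m
  proof (induction m rule: int_induct[where k = 0])
    case base
    from add[OF fsupp_single fsupp_single, of x 0 x 0] show ?case by simp
  next
    case (step1 i)
    have "D (\<lambda>z. if z = x then i + 1 else 0)
        = D (\<lambda>z. (if z = x then i else 0) + (if z = x then 1 else 0))"
      by (rule arg_cong[where f = D]) auto
    with add[OF fsupp_single fsupp_single] step1 basis show ?case by simp
  next
    case (step2 i)
    have "D (\<lambda>z. if z = x then i else 0)
        = D (\<lambda>z. (if z = x then i - 1 else 0) + (if z = x then 1 else 0))"
      by (rule arg_cong[where f = D]) auto
    with add[OF fsupp_single fsupp_single] step2 basis show ?case by simp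
  qed
  have "D a = 0" if "finite F" "{z. a z \<noteq> 0} \<subseteq> F" for a F
    using that
  proof (induction F arbitrary: a rule: finite_induct)
    case empty
    then have "a = (\<lambda>_. 0)" by auto
    with single[of undefined 0] show ?case by simp
  next
    case (insert w F)
    define a' where "a' = a(w := 0)"
    have "a = (\<lambda>z. a' z + (if z = w then a w else 0))"
      by (auto simp: a'_def)
    then have "D a = D (\<lambda>z. a' z + (if z = w then a w else 0))"
      by (rule arg_cong)
    also have "\<dots> = D a' + D (\<lambda>z. if z = w then a w else 0)"
      using insert by (intro add fsupp_single) (auto simp: fsupp_def a'_def intro: finite_subset)
    also have "\<dots> = 0"
      using insert.prems by (simp add: single) (rule insert.IH, auto simp: a'_def)
    finally show ?case .
  qed
  with \<open>fsupp a\<close> show ?thesis by (simp add: fsupp_def)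
qed

lemma additive_fst_function_eq:
  fixes P :: "'x::linorder fn2_elem \<Rightarrow> 'x \<Rightarrow> int"
  assumes P_mult: "\<And>u v. u \<in> carrier free_nil2 \<Longrightarrow> v \<in> carrier free_nil2
      \<Longrightarrow> P (u \<otimes>\<^bsub>free_nil2\<^esub> v) = (\<lambda>z. P u z + P v z)"
    and P_cong: "\<And>u v. u \<in> carrier free_nil2 \<Longrightarrow> v \<in> carrier free_nil2 \<Longrightarrow> fst u = fst v \<Longrightarrow> P u = P v"
    and P_gen: "\<And>x. P (fn2_gen x) = (\<lambda>z. if x = x0 \<and> z = y then 1 else 0)"
    and g: "g \<in> carrier free_nil2"
  shows "P g = (\<lambda>z. if z = y then fst g x0 else 0)"
proof -
  have pair_closed: "(a, \<lambda>_ _. 0) \<in> carrier free_nil2" if "fsupp a" for a :: "'x \<Rightarrow> int"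
    using that by (simp add: carrier_free_nil2 fn2_carrier_iff)
  have "P (a, \<lambda>_ _. 0) z - (if z = y then a x0 else 0) = 0" if "fsupp a" for a z
  proof (rule additive_vanishing_on_basis[OF _ _ that])
    fix a b :: "'x \<Rightarrow> int" assume ab: "fsupp a" "fsupp b"
    then have "P (\<lambda>z. a z + b z, \<lambda>_ _. 0) = P ((a, \<lambda>_ _. 0) \<otimes>\<^bsub>free_nil2\<^esub> (b, \<lambda>_ _. 0))"
      by (intro P_cong) (simp_all add: pair_closed fsupp_add)
    with ab show "P (\<lambda>z. a z + b z, \<lambda>_ _. 0) z - (if z = y then a x0 + b x0 else 0)
        = P (a, \<lambda>_ _. 0) z - (if z = y then a x0 else 0) + (P (b, \<lambda>_ _. 0) z - (if z = y then b x0 else 0))"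
      by (simp add: P_mult pair_closed)
  next
    fix x
    show "P (\<lambda>z. if z = x then 1 else 0, \<lambda>_ _. 0) z - (if z = y then (if x0 = x then 1 else 0) else 0) = 0"
      using P_gen[of x] by (auto simp: fn2_gen_def)
  qed
  moreover have "P g = P (fst g, \<lambda>_ _. 0)"
    using g by (intro P_cong) (simp_all add: pair_closed fsupp_fst)
  ultimately show ?thesis
    using fsupp_fst[OF g] by (simp add: fun_eq_iff)
qed

lemma fst_lift:
  fixes psi :: "'x::linorder fn2_elem set \<Rightarrow> 'x fn2_elem set" and L :: "'x fn2_elem \<Rightarrow> 'x fn2_elem"
  defines "K \<equiv> derived free_nil2 (carrier free_nil2)"
  assumes psi_hom: "psi \<in> hom (free_nil2 Mod K) (free_nil2 Mod K)"
    and psi_x0: "psi (K #>\<^bsub>free_nil2\<^esub> fn2_gen x0) = K #>\<^bsub>free_nil2\<^esub> fn2_gen y"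
    and psi_other: "\<And>x. x \<noteq> x0 \<Longrightarrow> psi (K #>\<^bsub>free_nil2\<^esub> fn2_gen x) = K"
    and L_closed: "\<And>g. g \<in> carrier free_nil2 \<Longrightarrow> L g \<in> carrier free_nil2"
    and L_lift: "\<And>g. g \<in> carrier free_nil2 \<Longrightarrow> K #>\<^bsub>free_nil2\<^esub> L g = psi (K #>\<^bsub>free_nil2\<^esub> g)"
    and g: "g \<in> carrier free_nil2"
  shows "fst (L g) = (\<lambda>z. if z = y then fst g x0 else 0)"
proof -
  interpret K: normal K free_nil2
    unfolding K_def by (rule fn2.derived_self_is_normal)
  have rcos_eq_iff: "K #>\<^bsub>free_nil2\<^esub> u = K #>\<^bsub>free_nil2\<^esub> v \<longleftrightarrow> fst u = fst v"
    if "u \<in> carrier free_nil2" "v \<in> carrier free_nil2" for u v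
    unfolding K_def using that by (rule rcos_derived_eq_iff)
  have rcos_hom: "(\<lambda>u. K #>\<^bsub>free_nil2\<^esub> u) \<in> hom free_nil2 (free_nil2 Mod K)"
    by (rule K.r_coset_hom_Mod)
  have mult: "fst (L (u \<otimes>\<^bsub>free_nil2\<^esub> v)) = (\<lambda>z. fst (L u) z + fst (L v) z)"
    if u: "u \<in> carrier free_nil2" and v: "v \<in> carrier free_nil2" for u v
  proof -
    have "K #>\<^bsub>free_nil2\<^esub> L (u \<otimes>\<^bsub>free_nil2\<^esub> v)
        = psi ((K #>\<^bsub>free_nil2\<^esub> u) \<otimes>\<^bsub>free_nil2 Mod K\<^esub> (K #>\<^bsub>free_nil2\<^esub> v))"
      using u v L_lift hom_mult[OF rcos_hom u v] by simp
    also have "\<dots> = psi (K #>\<^bsub>free_nil2\<^esub> u) \<otimes>\<^bsub>free_nil2 Mod K\<^esub> psi (K #>\<^bsub>free_nil2\<^esub> v)"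
      using u v hom_in_carrier[OF rcos_hom] by (intro hom_mult[OF psi_hom]) auto
    also have "\<dots> = K #>\<^bsub>free_nil2\<^esub> (L u \<otimes>\<^bsub>free_nil2\<^esub> L v)"
      using u v L_closed L_lift hom_mult[OF rcos_hom] by simp
    finally show ?thesis
      using u v L_closed by (simp add: rcos_eq_iff)
  qed
  have cong: "fst (L u) = fst (L v)"
    if "u \<in> carrier free_nil2" "v \<in> carrier free_nil2" "fst u = fst v" for u v
    using that L_closed L_lift by (simp flip: rcos_eq_iff)
  have gen: "fst (L (fn2_gen x)) = (\<lambda>z. if x = x0 \<and> z = y then 1 else 0)" for x
  proof (cases "x = x0")
    case True
    have "K #>\<^bsub>free_nil2\<^esub> L (fn2_gen x0) = K #>\<^bsub>free_nil2\<^esub> fn2_gen y"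
      using L_lift[OF fn2_gen_closed] psi_x0 by simp
    then have "fst (L (fn2_gen x0)) = fst (fn2_gen y)"
      by (simp add: rcos_eq_iff L_closed fn2_gen_closed)
    with True show ?thesis
      by (simp add: fn2_gen_def fun_eq_iff)
  next
    case False
    then have "K #>\<^bsub>free_nil2\<^esub> L (fn2_gen x) = K #>\<^bsub>free_nil2\<^esub> \<one>\<^bsub>free_nil2\<^esub>"
      using L_lift[OF fn2_gen_closed] psi_other fn2.coset_mult_one[OF K.subset] by simp
    then have "fst (L (fn2_gen x)) = fst \<one>\<^bsub>free_nil2\<^esub>"
      by (simp add: rcos_eq_iff L_closed fn2_gen_closed)
    with False show ?thesis
      by (simp add: free_nil2_def)
  qed
  show ?thesis
    using additive_fst_function_eq[where P = "\<lambda>g. fst (L g)", OF mult cong gen g] .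
qed

text \<open>The second summand is the commutator of h with a lift of psi_y(g), whose first
  component is g(x0) times the indicator of y.\<close>

definition circ_form :: "'x::linorder \<Rightarrow> 'x \<Rightarrow> ('x \<Rightarrow> int) \<Rightarrow> ('x \<Rightarrow> int) \<Rightarrow> 'x \<Rightarrow> 'x \<Rightarrow> int" where
  "circ_form x0 y a a' p q = fn2_form a a' p q
     + (if p < q then a x0 * ((if q = y then a' p else 0) - (if p = y then a' q else 0)) else 0)"

lemma biadditive_circ_form:
  fixes x0 y :: "'x::linorder"
  shows "biadditive_form (circ_form x0 y)"
proof
  fix a a' :: "'x \<Rightarrow> int" assume "fsupp a" "fsupp a'"
  moreover have "{(p, q). circ_form x0 y a a' p q \<noteq> 0}
      \<subseteq> {x. a' x \<noteq> 0} \<times> ({x. a x \<noteq> 0} \<union> {y}) \<union> {y} \<times> {x. a' x \<noteq> 0}"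
    by (auto simp: circ_form_def fn2_form_def split: if_splits)
  ultimately show "finite {(p, q). circ_form x0 y a a' p q \<noteq> 0}"
    by (auto simp: fsupp_def intro: finite_subset)
qed (auto simp: circ_form_def fn2_form_def algebra_simps split: if_splits)

lemma conj_eq_twisted_circ:
  assumes "g \<in> carrier free_nil2" "h \<in> carrier free_nil2" "l \<in> carrier free_nil2"
    and "fst l = (\<lambda>z. if z = y then fst g x0 else 0)"
  shows "g \<otimes>\<^bsub>free_nil2\<^esub> l \<otimes>\<^bsub>free_nil2\<^esub> h \<otimes>\<^bsub>free_nil2\<^esub> inv\<^bsub>free_nil2\<^esub> l
    = twisted_mult (circ_form x0 y) g h"
  using assms
  by (simp add: inv_free_nil2 mult_free_nil2)
    (simp add: twisted_mult_def twisted_inv_def circ_form_def fn2_form_def fun_eq_iff algebra_simps)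

lemma twisted_circ_form_neq:
  assumes "y \<noteq> z"
  shows "twisted_mult (circ_form x0 y) (fn2_gen x0) (fn2_gen y)
    \<noteq> twisted_mult (circ_form x0 z) (fn2_gen x0) (fn2_gen y)"
proof
  assume eq: "twisted_mult (circ_form x0 y) (fn2_gen x0) (fn2_gen y)
    = twisted_mult (circ_form x0 z) (fn2_gen x0) (fn2_gen y)"
  have "snd (twisted_mult (circ_form x0 y) (fn2_gen x0) (fn2_gen y)) p q
    = snd (twisted_mult (circ_form x0 z) (fn2_gen x0) (fn2_gen y)) p q" for p q
    by (simp add: eq)
  from this[of y z] this[of z y] assms show False
    by (cases y z rule: linorder_cases) (auto simp: twisted_mult_def circ_form_def fn2_form_def fn2_gen_def)
qed

theorem mainTheorem12:
  fixes x0 :: "'x::wellorder"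
    and psi :: "'x \<Rightarrow> (('x \<Rightarrow> int) \<times> ('x \<Rightarrow> 'x \<Rightarrow> int)) set \<Rightarrow> (('x \<Rightarrow> int) \<times> ('x \<Rightarrow> 'x \<Rightarrow> int)) set"
    and L :: "'x \<Rightarrow> (('x \<Rightarrow> int) \<times> ('x \<Rightarrow> 'x \<Rightarrow> int)) \<Rightarrow> (('x \<Rightarrow> int) \<times> ('x \<Rightarrow> 'x \<Rightarrow> int))"
  defines "G \<equiv> (free_nil2 :: (('x \<Rightarrow> int) \<times> ('x \<Rightarrow> 'x \<Rightarrow> int)) monoid)"
  defines "K \<equiv> derived G (carrier G)"
  assumes least: "\<forall>x. x0 \<le> x"
    and psi_hom: "\<forall>y. psi y \<in> hom (G Mod K) (G Mod K)"
    and psi_x0: "\<forall>y. psi y (K #>\<^bsub>G\<^esub> fn2_gen x0) = K #>\<^bsub>G\<^esub> fn2_gen y"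
    and psi_other: "\<forall>y x. x \<noteq> x0 \<longrightarrow> psi y (K #>\<^bsub>G\<^esub> fn2_gen x) = K"
    and L_carrier: "\<forall>y. \<forall>g\<in>carrier G. L y g \<in> carrier G"
    and L_lift: "\<forall>y. \<forall>g\<in>carrier G. K #>\<^bsub>G\<^esub> L y g = psi y (K #>\<^bsub>G\<^esub> g)"
  shows "brace_block (carrier G)
           (\<lambda>y g h. g \<otimes>\<^bsub>G\<^esub> L y g \<otimes>\<^bsub>G\<^esub> h \<otimes>\<^bsub>G\<^esub> inv\<^bsub>G\<^esub> (L y g))
       \<and> (\<forall>y. fn2_gen x0 \<otimes>\<^bsub>G\<^esub> L y (fn2_gen x0) \<otimes>\<^bsub>G\<^esub> fn2_gen x0 \<otimes>\<^bsub>G\<^esub> inv\<^bsub>G\<^esub> (L y (fn2_gen x0))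
              = fn2_gen x0 \<otimes>\<^bsub>G\<^esub> fn2_gen y \<otimes>\<^bsub>G\<^esub> fn2_gen x0 \<otimes>\<^bsub>G\<^esub> inv\<^bsub>G\<^esub> (fn2_gen y))
       \<and> (\<forall>y z. y \<noteq> z \<longrightarrow>
              (\<exists>g\<in>carrier G. \<exists>h\<in>carrier G.
                 g \<otimes>\<^bsub>G\<^esub> L y g \<otimes>\<^bsub>G\<^esub> h \<otimes>\<^bsub>G\<^esub> inv\<^bsub>G\<^esub> (L y g)
                 \<noteq> g \<otimes>\<^bsub>G\<^esub> L z g \<otimes>\<^bsub>G\<^esub> h \<otimes>\<^bsub>G\<^esub> inv\<^bsub>G\<^esub> (L z g)))"
proof -
  have op_eq: "g \<otimes>\<^bsub>G\<^esub> L y g \<otimes>\<^bsub>G\<^esub> h \<otimes>\<^bsub>G\<^esub> inv\<^bsub>G\<^esub> (L y g) = twisted_mult (circ_form x0 y) g h"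
    if "g \<in> fn2_carrier" "h \<in> fn2_carrier" for y g h
  proof -
    have "fst (L y g) = (\<lambda>z. if z = y then fst g x0 else 0)"
      using fst_lift[of "psi y" x0 y "L y" g] psi_hom psi_x0 psi_other L_carrier L_lift that
      unfolding G_def K_def carrier_free_nil2 by blast
    then show ?thesis
      using that L_carrier unfolding G_def carrier_free_nil2
      by (intro conj_eq_twisted_circ) (auto simp: carrier_free_nil2)
  qed
  have gen_conj: "fn2_gen x0 \<otimes>\<^bsub>G\<^esub> fn2_gen y \<otimes>\<^bsub>G\<^esub> fn2_gen x0 \<otimes>\<^bsub>G\<^esub> inv\<^bsub>G\<^esub> (fn2_gen y)
      = twisted_mult (circ_form x0 y) (fn2_gen x0) (fn2_gen x0)" for y
    unfolding G_def
    by (rule conj_eq_twisted_circ[OF fn2_gen_closed fn2_gen_closed fn2_gen_closed])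
      (simp add: fn2_gen_def fun_eq_iff)
  have gen: "fn2_gen x \<in> fn2_carrier" for x
    using fn2_gen_closed by (simp add: carrier_free_nil2)
  have "brace_block (carrier G) (\<lambda>y g h. g \<otimes>\<^bsub>G\<^esub> L y g \<otimes>\<^bsub>G\<^esub> h \<otimes>\<^bsub>G\<^esub> inv\<^bsub>G\<^esub> (L y g))"
    unfolding G_def carrier_free_nil2
    by (rule brace_block_twisted[OF biadditive_circ_form]) (simp add: op_eq[unfolded G_def])
  moreover have "\<exists>g\<in>carrier G. \<exists>h\<in>carrier G.
      g \<otimes>\<^bsub>G\<^esub> L y g \<otimes>\<^bsub>G\<^esub> h \<otimes>\<^bsub>G\<^esub> inv\<^bsub>G\<^esub> (L y g) \<noteq> g \<otimes>\<^bsub>G\<^esub> L z g \<otimes>\<^bsub>G\<^esub> h \<otimes>\<^bsub>G\<^esub> inv\<^bsub>G\<^esub> (L z g)"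
    if "y \<noteq> z" for y z
    using twisted_circ_form_neq[OF that, of x0] gen op_eq
    unfolding G_def carrier_free_nil2 by metis
  moreover have "\<forall>y. fn2_gen x0 \<otimes>\<^bsub>G\<^esub> L y (fn2_gen x0) \<otimes>\<^bsub>G\<^esub> fn2_gen x0 \<otimes>\<^bsub>G\<^esub> inv\<^bsub>G\<^esub> (L y (fn2_gen x0))
      = fn2_gen x0 \<otimes>\<^bsub>G\<^esub> fn2_gen y \<otimes>\<^bsub>G\<^esub> fn2_gen x0 \<otimes>\<^bsub>G\<^esub> inv\<^bsub>G\<^esub> (fn2_gen y)"
    using op_eq[OF gen gen] gen_conj by simp
  ultimately show ?thesis
    by blast
qed

end
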